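(* Let $D$ be a division semialgebra over $\mathbb{Z}_\mathrm{max}$ with finite unit index. Then the group $G=D^\times/\mathbb{Z}_\mathrm{max}^\times$ is cyclic.
   Context: A (possibly noncommutative) semiring has a commutative associative addition with identity $0$ and an associative multiplication with identity $1$, satisfying both distributive laws; a division semiring is one in which every nonzero element is invertible. $\mathbb{Z}_\mathrm{max}=\mathbb{Z}\cup\{-\infty\}$ is the semifield with addition $\max$ and multiplication ordinary addition. A division semialgebra over a semifield $K$ is a division semiring $D$ with an injective homomorphism from $K$ into the center of $D$. The unit index is $\mathrm{ui}(D/K)=|D^\times/K^\times|$. *)

theory Defs
  imports "HOL-Algebra.Coset" "HOL-Algebra.Generated_Groups"
begin

text \<open>Z_max = Z \<union> {-\<infinity>} is modelled as int option, None standing for -\<infinity>.\<close>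

fun zmax_add :: "int option \<Rightarrow> int option \<Rightarrow> int option" where
  "zmax_add None b = b"
| "zmax_add (Some a) None = Some a"
| "zmax_add (Some a) (Some b) = Some (max a b)"

fun zmax_mul :: "int option \<Rightarrow> int option \<Rightarrow> int option" where
  "zmax_mul (Some a) (Some b) = Some (a + b)"
| "zmax_mul _ _ = None"

definition zmax_zero :: "int option" where "zmax_zero = None"
definition zmax_one :: "int option" where "zmax_one = Some 0"

definition zmax_units :: "int option set" where "zmax_units = range Some"

text \<open>A (possibly noncommutative) semiring in the sense of the paper: commutative
  monoid under +, monoid under *, both distributive laws.  This is exactly the
  sort {semiring, comm_monoid_add, monoid_mult}.\<close>

definition dunits :: "'d::{semiring,comm_monoid_add,monoid_mult} set" where
  "dunits = {x. \<exists>y. x * y = 1 \<and> y * x = 1}"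

definition division_semiring :: "'d::{semiring,comm_monoid_add,monoid_mult} itself \<Rightarrow> bool" where
  "division_semiring _ \<longleftrightarrow> (\<forall>x::'d. x \<noteq> 0 \<longrightarrow> x \<in> dunits)"

definition center :: "'d::{semiring,comm_monoid_add,monoid_mult} set" where
  "center = {z. \<forall>y::'d. z * y = y * z}"

definition semiring_hom_zmax :: "(int option \<Rightarrow> 'd::{semiring,comm_monoid_add,monoid_mult}) \<Rightarrow> bool" where
  "semiring_hom_zmax \<phi> \<longleftrightarrow>
     \<phi> zmax_zero = 0 \<and> \<phi> zmax_one = 1 \<and>
     (\<forall>a b. \<phi> (zmax_add a b) = \<phi> a + \<phi> b) \<and>
     (\<forall>a b. \<phi> (zmax_mul a b) = \<phi> a * \<phi> b)"

definition division_semialgebra_zmax :: "(int option \<Rightarrow> 'd::{semiring,comm_monoid_add,monoid_mult}) \<Rightarrow> bool" where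
  "division_semialgebra_zmax \<phi> \<longleftrightarrow>
     division_semiring TYPE('d) \<and> semiring_hom_zmax \<phi> \<and> inj \<phi> \<and> range \<phi> \<subseteq> center"

definition unit_group :: "('d::{semiring,comm_monoid_add,monoid_mult}) monoid" where
  "unit_group = \<lparr>carrier = dunits, mult = (*), one = 1\<rparr>"

definition unit_quotient :: "(int option \<Rightarrow> 'd::{semiring,comm_monoid_add,monoid_mult}) \<Rightarrow> 'd set monoid" where
  "unit_quotient \<phi> = unit_group Mod (\<phi> ` zmax_units)"

definition cyclic_group :: "('a, 'b) monoid_scheme \<Rightarrow> bool" where
  "cyclic_group G \<longleftrightarrow> (\<exists>g \<in> carrier G. generate G {g} = carrier G)"

end

theory Submission
  imports Defs
begin

text \<open>
  Since \<open>1 + 1 = max 0 0 = 1\<close> in \<open>\<int>\<^sub>m\<^sub>a\<^sub>x\<close>, \<open>D\<close> is additively idempotent, and a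
  finite unit index gives an \<open>N > 0\<close> with \<open>x\<^sup>N \<in> \<int>\<^sub>m\<^sub>a\<^sub>x\<^sup>\<times>\<close> for every unit \<open>x\<close>.
  By idempotency \<open>(1 + x)\<^sup>n\<close> is the sum of the powers \<open>x\<^sup>i\<close> with \<open>i \<le> n\<close>; this shows
  that units have no torsion, and evaluating \<open>(1 + x)\<^sup>2\<^sup>N = (1 + x)\<^sup>N + x\<^sup>N (1 + x)\<^sup>N\<close>
  inside \<open>\<int>\<^sub>m\<^sub>a\<^sub>x\<close> gives \<open>1 + x \<in> {1, x}\<close>.  Hence the units are totally ordered by
  \<open>x + y = y\<close>, their \<open>N\<close>-th roots are unique, and as \<open>x\<^sup>N\<close> is central all units
  commute.  Writing \<open>x\<^sup>N = \<iota> (val x)\<close>, the map \<open>val\<close> embeds \<open>D\<^sup>\<times>\<close> into \<open>\<int>\<close>, so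
  \<open>D\<^sup>\<times>\<close> is cyclic and hence so is its quotient \<open>G\<close>.
\<close>

definition idem_division_semiring :: "'d::{semiring,comm_monoid_add,monoid_mult} itself \<Rightarrow> bool" where
  "idem_division_semiring _ \<longleftrightarrow> division_semiring TYPE('d) \<and> (1::'d) \<noteq> 0 \<and> (1::'d) + 1 = 1"

context
  assumes one_add_one: "(1::'d::{semiring,comm_monoid_add,monoid_mult}) + 1 = 1"
begin

lemma add_idem: "x + x = (x::'d)"
proof -
  have "x * (1 + 1) = x" using one_add_one by simp
  then show ?thesis by (simp add: distrib_left)
qed

lemma add_eq_zero_imp_left: "a + b = 0 \<Longrightarrow> a = (0::'d)"
  by (metis add.assoc add_0_right add_idem)

lemma one_plus_power_Suc: "(1 + x) ^ Suc n = (1 + x) ^ n + (x::'d) ^ Suc n"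
proof (induction n)
  case (Suc n)
  have "(1 + x) ^ Suc (Suc n) = (1 + x) * ((1 + x) ^ n + x ^ Suc n)"
    using Suc by (simp only: power_Suc)
  also have "\<dots> = (1 + x) ^ Suc n + (x ^ Suc n + x ^ Suc (Suc n))"
    by (simp add: distrib_left distrib_right add_ac)
  also have "\<dots> = (1 + x) ^ n + (x ^ Suc n + x ^ Suc n) + x ^ Suc (Suc n)"
    using Suc by (simp add: add_ac)
  also have "\<dots> = (1 + x) ^ Suc n + x ^ Suc (Suc n)"
    using Suc by (simp add: add_idem add_ac)
  finally show ?case .
qed simp

lemma one_plus_power_absorbs_power: "(1 + x) ^ n + (x::'d) ^ n = (1 + x) ^ n"
proof (cases n)
  case (Suc m)
  then show ?thesis using one_plus_power_Suc[of x m] by (simp add: add.assoc add_idem)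
qed (simp add: add_idem)

lemma one_plus_power_absorbs_one: "1 + (1 + x) ^ n = (1 + (x::'d)) ^ n"
proof (induction n)
  case (Suc n)
  then show ?case using one_plus_power_Suc[of x n] by (metis add.assoc)
qed (simp add: add_idem)

lemma one_plus_power_Suc_Horner: "(1 + x) ^ Suc n = 1 + x * (1 + (x::'d)) ^ n"
proof (induction n)
  case (Suc n)
  have "(1 + x) ^ Suc (Suc n) = 1 + x * (1 + x) ^ n + x ^ Suc (Suc n)"
    using Suc one_plus_power_Suc[of x "Suc n"] by simp
  also have "\<dots> = 1 + x * ((1 + x) ^ n + x ^ Suc n)"
    by (simp add: distrib_left add.assoc)
  also have "\<dots> = 1 + x * (1 + x) ^ Suc n"
    using one_plus_power_Suc[of x n] by simp
  finally show ?case .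
qed simp

lemma one_plus_power_add: "(1 + x) ^ (n + m) = (1 + x) ^ n + x ^ n * (1 + (x::'d)) ^ m"
proof (induction m)
  case (Suc m)
  have "(1 + x) ^ (n + Suc m) = (1 + x) ^ (n + m) + x ^ (n + Suc m)"
    using one_plus_power_Suc[of x "n + m"] by (simp only: add_Suc_right)
  also have "\<dots> = (1 + x) ^ (n + m) + x ^ n * x ^ Suc m"
    by (simp only: power_add)
  also have "\<dots> = (1 + x) ^ n + x ^ n * ((1 + x) ^ m + x ^ Suc m)"
    using Suc by (simp add: distrib_left add.assoc)
  also have "\<dots> = (1 + x) ^ n + x ^ n * (1 + x) ^ Suc m"
    using one_plus_power_Suc[of x m] by simp
  finally show ?case .
qed (simp add: one_plus_power_absorbs_power)

lemma power_mult_absorbed: "x + y = y \<Longrightarrow> x ^ k * b + y ^ k * b = y ^ k * (b::'d)"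
proof (induction k)
  case (Suc k)
  let ?X = "x ^ k * b" and ?Y = "y ^ k * b"
  have "x * ?X + x * ?Y = x * ?Y" using Suc by (metis distrib_left)
  moreover have "x * ?Y + y * ?Y = y * ?Y" using Suc.prems by (metis distrib_right)
  ultimately have "x * ?X + y * ?Y = y * ?Y" by (metis add.assoc)
  then show ?case by (simp add: mult.assoc)
qed (simp add: add_idem)

end

lemma unit_group_eq_units_of:
  "(unit_group :: 'd::{semiring,comm_monoid_add,monoid_mult} monoid)
     = units_of \<lparr>carrier = UNIV, mult = (*), one = 1\<rparr>"
  by (auto simp: unit_group_def units_of_def Units_def dunits_def)

lemma group_unit_group: "group (unit_group :: 'd::{semiring,comm_monoid_add,monoid_mult} monoid)"
proof -
  have "monoid \<lparr>carrier = UNIV, mult = (*), one = 1 :: 'd\<rparr>"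
    by unfold_locales (simp_all add: mult.assoc)
  then show ?thesis unfolding unit_group_eq_units_of by (rule monoid.units_group)
qed

lemma unit_group_simps [simp]:
  "carrier unit_group = dunits" "mult unit_group = (*)" "one unit_group = 1"
  by (simp_all add: unit_group_def)

lemma unit_group_nat_pow [simp]: "x [^]\<^bsub>unit_group\<^esub> (n::nat) = x ^ n"
  by (induction n) (simp_all add: power_commutes)

lemma dunits_closed [simp]:
  fixes x y :: "'d::{semiring,comm_monoid_add,monoid_mult}"
  assumes x: "x \<in> dunits"
  shows "y \<in> dunits \<Longrightarrow> x * y \<in> dunits" and "x ^ n \<in> dunits"
    and "inv\<^bsub>unit_group\<^esub> x \<in> dunits"
    and "x * inv\<^bsub>unit_group\<^esub> x = 1" and "inv\<^bsub>unit_group\<^esub> x * x = 1"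
proof -
  interpret U: group "unit_group :: 'd monoid" by (rule group_unit_group)
  show "y \<in> dunits \<Longrightarrow> x * y \<in> dunits" using x U.m_closed by simp
  show "x ^ n \<in> dunits" using x U.nat_pow_closed[of x n] by simp
  show "inv\<^bsub>unit_group\<^esub> x \<in> dunits" using x U.inv_closed by simp
  show "x * inv\<^bsub>unit_group\<^esub> x = 1" using x U.r_inv by simp
  show "inv\<^bsub>unit_group\<^esub> x * x = 1" using x U.l_inv by simp
qed

lemma idem_division_semiring_power_eq_one:
  fixes x :: "'d::{semiring,comm_monoid_add,monoid_mult}"
  assumes D: "idem_division_semiring TYPE('d)" and "0 < n" and x: "x ^ n = 1"
  shows "x = 1"
proof -
  have one_add_one: "(1::'d) + 1 = 1" using D by (simp add: idem_division_semiring_def)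
  obtain m where n: "n = Suc m" using \<open>0 < n\<close> gr0_conv_Suc by blast
  define s where "s = (1 + x) ^ m"
  have "s = (1 + x) ^ Suc m"
    using one_plus_power_Suc[OF one_add_one, of x m] one_plus_power_absorbs_one[OF one_add_one, of x m]
      x n s_def by (simp add: add.commute)
  also have "\<dots> = 1 + x * s"
    using one_plus_power_Suc_Horner[OF one_add_one] s_def by simp
  also have "\<dots> = x * s"
  proof -
    have "x * s + x ^ Suc m = x * s"
      using one_plus_power_absorbs_power[OF one_add_one, of x m] s_def
      by (metis distrib_left power_Suc)
    then show ?thesis using x n by (simp add: add.commute)
  qed
  finally have s_fixed: "s = x * s" .
  have "s \<noteq> 0"
    using one_plus_power_absorbs_one[OF one_add_one, of x m] D s_def
    by (auto simp: idem_division_semiring_def)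
  then obtain s' where "s * s' = 1"
    using D by (auto simp: idem_division_semiring_def division_semiring_def dunits_def)
  then show ?thesis using s_fixed by (metis mult.assoc mult_1_right)
qed

lemma idem_division_semiring_commuting_power_inj:
  fixes x y :: "'d::{semiring,comm_monoid_add,monoid_mult}"
  assumes D: "idem_division_semiring TYPE('d)" and units: "x \<in> dunits" "y \<in> dunits"
    and comm: "x * y = y * x" and "0 < n" and eq: "x ^ n = y ^ n"
  shows "x = y"
proof -
  interpret U: group "unit_group :: 'd monoid" by (rule group_unit_group)
  let ?y' = "inv\<^bsub>unit_group\<^esub> y"
  have "?y' * x = ?y' * x * (y * ?y')" using units by simp
  also have "\<dots> = ?y' * (x * y) * ?y'" by (simp add: mult.assoc)
  also have "\<dots> = (?y' * y) * x * ?y'" using comm by (simp add: mult.assoc)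
  also have "\<dots> = x * ?y'" using units by simp
  finally have "(x * ?y') ^ n = x ^ n * ?y' ^ n"
    using U.pow_mult_distrib[of x ?y' n] units by simp
  also have "\<dots> = y ^ n * inv\<^bsub>unit_group\<^esub> (y ^ n)"
    using U.nat_pow_inv[of y n] units eq by simp
  also have "\<dots> = 1" using units by simp
  finally have "x * ?y' = 1"
    using idem_division_semiring_power_eq_one[OF D \<open>0 < n\<close>] by blast
  then have "x * ?y' * y = y" by simp
  then show ?thesis using units by (simp add: mult.assoc)
qed

lemma power_intertwine: "z * y = y * x \<Longrightarrow> z ^ n * y = y * (x::'a::monoid_mult) ^ n"
  by (induction n) (simp_all add: mult.assoc, metis mult.assoc)

lemma (in group) finite_index_uniform_exponent:
  assumes H: "subgroup H G" and fin: "finite (rcosets H)"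
  shows "\<exists>N::nat>0. \<forall>x\<in>carrier G. x [^] N \<in> H"
proof -
  let ?M = "card (rcosets H)"
  let ?N = "fact ?M :: nat"
  have "x [^] ?N \<in> H" if x: "x \<in> carrier G" for x
  proof -
    let ?f = "\<lambda>i::nat. H #> x [^] i"
    have "?f ` {..?M} \<subseteq> rcosets H"
      using x subgroup.subset[OF H] by (auto intro: rcosetsI)
    then have "\<not> inj_on ?f {..?M}"
      using card_inj_on_le[OF _ _ fin] by fastforce
    then obtain a b where ab: "a < b" "b \<le> ?M" "?f a = ?f b"
      unfolding inj_on_def by (metis atMost_iff linorder_neqE_nat)
    have "x [^] b \<in> H #> x [^] a"
      using ab(3) rcos_self[OF _ H] x by simp
    then have "x [^] b \<otimes> inv (x [^] a) \<in> H"
      using subgroup.rcos_module_imp[OF H is_group] x by simp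
    moreover have "x [^] b \<otimes> inv (x [^] a) = x [^] (b - a)"
      using x ab(1) nat_pow_mult[of x "b - a" a] by (simp add: inv_solve_right')
    ultimately have root: "x [^] (b - a) \<in> H" by simp
    have "(b - a) dvd ?N" using ab by (intro dvd_fact) auto
    then obtain c where "?N = (b - a) * c" by (elim dvdE)
    then have "x [^] ?N = (x [^] (b - a)) [^] (int c)"
      using x by (simp add: int_pow_int nat_pow_pow)
    then show ?thesis using subgroup_int_pow_closed[OF H root] by simp
  qed
  then show ?thesis by (meson fact_gt_zero)
qed

lemma cyclic_group_FactGroup:
  fixes G (structure)
  assumes cyc: "cyclic_group G" and nH: "H \<lhd> G"
  shows "cyclic_group (G Mod H)"
proof -
  obtain g where g: "g \<in> carrier G" "generate G {g} = carrier G"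
    using cyc by (auto simp: cyclic_group_def)
  interpret normal H G by (fact nH)
  have hom: "group_hom G (G Mod H) (\<lambda>a. H #> a)"
    using r_coset_hom_Mod factorgroup_is_group is_group
    by (simp add: group_hom_def group_hom_axioms_def)
  have "generate (G Mod H) {H #> g} = (\<lambda>a. H #> a) ` carrier G"
    using group_hom.generate_img[OF hom, of "{g}"] g by simp
  also have "\<dots> = carrier (G Mod H)"
    by (auto simp: FactGroup_def RCOSETS_def)
  finally show ?thesis
    unfolding cyclic_group_def using g(1) by (auto simp: FactGroup_def RCOSETS_def)
qed

lemma int_set_closed_diff_eq_multiples:
  fixes S :: "int set"
  assumes diff: "\<And>a b. a \<in> S \<Longrightarrow> b \<in> S \<Longrightarrow> a - b \<in> S" and n: "n \<in> S" "n \<noteq> 0"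
  shows "\<exists>d>0. S = range (\<lambda>k. k * d)"
proof -
  have zero: "0 \<in> S" using diff[OF n(1) n(1)] by simp
  have "\<exists>m::nat. 0 < m \<and> int m \<in> S"
    using n diff[OF zero n(1)] by (intro exI[of _ "nat \<bar>n\<bar>"]) (auto simp: abs_if)
  define d where "d = (LEAST m::nat. 0 < m \<and> int m \<in> S)"
  have d: "0 < d" "int d \<in> S"
    using LeastI_ex[OF \<open>\<exists>m. _\<close>] by (simp_all add: d_def)
  have multiples: "k * int d \<in> S" for k
  proof (induction k rule: int_induct[where k = 0])
    case (step1 i)
    then show ?case using diff[OF step1(2) diff[OF zero d(2)]] by (simp add: algebra_simps)
  next
    case (step2 i)
    then show ?case using diff[OF step2(2) d(2)] by (simp add: algebra_simps)
  qed (simp add: zero)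
  have "s \<in> range (\<lambda>k. k * int d)" if s: "s \<in> S" for s
  proof -
    have "s mod int d = s - (s div int d) * int d" by (simp add: minus_div_mult_eq_mod)
    then have "s mod int d \<in> S" using diff[OF s multiples] by simp
    moreover have "0 \<le> s mod int d" "s mod int d < int d" using d(1) by simp_all
    ultimately have "s mod int d = 0"
      using not_less_Least[of "nat (s mod int d)" "\<lambda>m. 0 < m \<and> int m \<in> S"]
      by (fastforce simp: d_def)
    then show ?thesis by (metis div_mult_mod_eq add_0_right rangeI)
  qed
  then show ?thesis using d(1) multiples by (intro exI[of _ "int d"]) auto
qed

locale zmax_semialgebra =
  fixes \<phi> :: "int option \<Rightarrow> 'd::{semiring,comm_monoid_add,monoid_mult}"
  assumes division_semialgebra: "division_semialgebra_zmax \<phi>"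
begin

definition \<iota> :: "int \<Rightarrow> 'd" where "\<iota> k = \<phi> (Some k)"

lemma semiring_hom: "semiring_hom_zmax \<phi>"
  using division_semialgebra by (simp add: division_semialgebra_zmax_def)

lemma iota_add: "\<iota> a + \<iota> b = \<iota> (max a b)"
  using semiring_hom unfolding semiring_hom_zmax_def \<iota>_def by (metis zmax_add.simps(3))

lemma iota_mult: "\<iota> a * \<iota> b = \<iota> (a + b)"
  using semiring_hom unfolding semiring_hom_zmax_def \<iota>_def by (metis zmax_mul.simps(1))

lemma iota_zero: "\<iota> 0 = 1"
  using semiring_hom by (simp add: semiring_hom_zmax_def zmax_one_def \<iota>_def)

lemma inj_iota: "inj \<iota>"
  using division_semialgebra by (auto simp: division_semialgebra_zmax_def \<iota>_def inj_def)

lemma iota_commute: "\<iota> a * y = y * \<iota> a"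
  using division_semialgebra by (auto simp: division_semialgebra_zmax_def center_def \<iota>_def)

lemma idem_division_semiring: "idem_division_semiring TYPE('d)"
proof -
  have "\<phi> None = 0" using semiring_hom by (simp add: semiring_hom_zmax_def zmax_zero_def)
  then have "(1::'d) \<noteq> 0"
    using division_semialgebra iota_zero unfolding division_semialgebra_zmax_def \<iota>_def
    by (metis injD option.distinct(1))
  then show ?thesis
    using division_semialgebra iota_add[of 0 0] iota_zero
    by (simp add: idem_division_semiring_def division_semialgebra_zmax_def)
qed

lemma iota_in_dunits: "\<iota> k \<in> dunits"
  unfolding dunits_def using iota_mult[of k "- k"] iota_mult[of "- k" k] iota_zero by auto

lemma iota_power: "\<iota> k ^ n = \<iota> (int n * k)"
  by (induction n) (simp_all add: iota_zero iota_mult algebra_simps)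

lemma image_zmax_units: "\<phi> ` zmax_units = range \<iota>"
  unfolding zmax_units_def \<iota>_def by auto

lemma subgroup_range_iota: "subgroup (range \<iota>) unit_group"
proof (rule group.subgroupI[OF group_unit_group])
  fix a b assume "a \<in> range \<iota>" "b \<in> range \<iota>"
  then show "a \<otimes>\<^bsub>unit_group\<^esub> b \<in> range \<iota>" by (auto simp: iota_mult)
  from \<open>a \<in> range \<iota>\<close> obtain k where "a = \<iota> k" by auto
  then have "inv\<^bsub>unit_group\<^esub> a = \<iota> (- k)"
    using group.inv_equality[OF group_unit_group, of "\<iota> (- k)" "\<iota> k"] iota_mult[of "- k" k]
      iota_zero iota_in_dunits by simp
  then show "inv\<^bsub>unit_group\<^esub> a \<in> range \<iota>" by simp
qed (use iota_in_dunits in auto)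

lemma uniform_exponent:
  assumes "finite (carrier (unit_quotient \<phi>))"
  shows "\<exists>N>0. \<forall>x\<in>dunits. x ^ N \<in> range \<iota>"
  using group.finite_index_uniform_exponent[OF group_unit_group subgroup_range_iota] assms
  by (simp add: unit_quotient_def image_zmax_units FactGroup_def)

end

locale zmax_semialgebra_exponent = zmax_semialgebra \<phi>
  for \<phi> :: "int option \<Rightarrow> 'd::{semiring,comm_monoid_add,monoid_mult}" +
  fixes N :: nat
  assumes exponent_pos: "0 < N"
    and power_exponent_in_range: "x \<in> dunits \<Longrightarrow> x ^ N \<in> range \<iota>"
begin

lemma one_add_unit:
  fixes x :: 'd
  assumes x: "x \<in> dunits"
  shows "1 + x = 1 \<or> 1 + x = x"
proof -
  have D: "idem_division_semiring TYPE('d)" by (fact idem_division_semiring)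
  obtain a where a: "x ^ N = \<iota> a" using power_exponent_in_range[OF x] by auto
  have "1 + x \<noteq> 0"
    using add_eq_zero_imp_left[of 1 x] D by (auto simp: idem_division_semiring_def)
  then have unit: "1 + x \<in> dunits"
    using D by (auto simp: idem_division_semiring_def division_semiring_def)
  then obtain c where c: "(1 + x) ^ N = \<iota> c" using power_exponent_in_range by blast
  have "\<iota> (c + c) = (1 + x) ^ (N + N)" using c by (simp add: power_add iota_mult)
  also have "\<dots> = \<iota> (max c (a + c))"
    using one_plus_power_add[of x N N] D a c
    by (simp add: idem_division_semiring_def iota_mult iota_add)
  finally have "c = max 0 a" using inj_iota by (auto dest: injD)
  show ?thesis
  proof (cases "0 \<le> a")
    case True
    then have "(1 + x) ^ N = x ^ N" using a c \<open>c = max 0 a\<close> by simp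
    moreover have "(1 + x) * x = x * (1 + x)" by (simp add: distrib_left distrib_right)
    ultimately show ?thesis
      using idem_division_semiring_commuting_power_inj[OF D unit x _ exponent_pos] by blast
  next
    case False
    then have "(1 + x) ^ N = 1" using c \<open>c = max 0 a\<close> iota_zero by simp
    then show ?thesis using idem_division_semiring_power_eq_one[OF D exponent_pos] by blast
  qed
qed

lemma add_units:
  fixes x y :: 'd
  assumes x: "x \<in> dunits" and y: "y \<in> dunits"
  shows "x + y = y \<or> x + y = x"
proof -
  let ?z = "inv\<^bsub>unit_group\<^esub> y * x"
  have "y * ?z = x" using y by (simp flip: mult.assoc)
  moreover have "y * (1 + ?z) = y + y * ?z" by (simp add: distrib_left)
  ultimately show ?thesis using one_add_unit[of ?z] x y by (auto simp: add.commute)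
qed

lemma units_power_inj:
  fixes x y :: 'd
  assumes x: "x \<in> dunits" and y: "y \<in> dunits" and "0 < n" "x ^ n = y ^ n"
  shows "x = y"
proof -
  have below: "x = y"
    if x: "x \<in> dunits" and y: "y \<in> dunits" and "x + y = y" "x ^ Suc m = y ^ Suc m"
    for x y :: 'd and m
  proof -
    interpret U: group "unit_group :: 'd monoid" by (rule group_unit_group)
    have one_add_one: "(1::'d) + 1 = 1"
      using idem_division_semiring by (simp add: idem_division_semiring_def)
    have "x ^ m * x + x ^ m * y = x ^ m * y" using \<open>x + y = y\<close> by (metis distrib_left)
    moreover have "x ^ m * y + y ^ m * y = y ^ m * y"
      using power_mult_absorbed[OF one_add_one \<open>x + y = y\<close>] .
    moreover have "y ^ m * y = x ^ m * x"
      using \<open>x ^ Suc m = y ^ Suc m\<close> by (simp add: power_commutes)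
    ultimately have "x ^ m * x = x ^ m * y" by (metis add.commute)
    then show ?thesis using U.Units_l_cancel[of "x ^ m" x y] x y by simp
  qed
  obtain m where n: "n = Suc m" using \<open>0 < n\<close> gr0_conv_Suc by blast
  from add_units[OF x y] show ?thesis
  proof
    assume "x + y = y" then show ?thesis using below[OF x y] \<open>x ^ n = y ^ n\<close> n by blast
  next
    assume "x + y = x" then show ?thesis
      using below[OF y x, of m] \<open>x ^ n = y ^ n\<close> n by (simp add: add.commute)
  qed
qed

lemma units_commute:
  fixes x y :: 'd
  assumes x: "x \<in> dunits" and y: "y \<in> dunits"
  shows "x * y = y * x"
proof -
  interpret U: group "unit_group :: 'd monoid" by (rule group_unit_group)
  define z where "z = y * x * inv\<^bsub>unit_group\<^esub> y"
  have z: "z \<in> dunits" "z * y = y * x"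
    using x y by (simp_all add: z_def mult.assoc)
  obtain a where "x ^ N = \<iota> a" using power_exponent_in_range[OF x] by auto
  then have "z ^ N * y = x ^ N * y"
    using power_intertwine[OF z(2)] iota_commute by simp
  then have "z ^ N = x ^ N"
    using U.right_cancel[of y "z ^ N" "x ^ N"] x y z(1) by simp
  then have "z = x" using units_power_inj[OF z(1) x exponent_pos] by blast
  then show ?thesis using z(2) by simp
qed

lemma comm_group_unit_group: "comm_group (unit_group :: 'd monoid)"
  by (rule group.group_comm_groupI[OF group_unit_group]) (simp add: units_commute)

definition val :: "'d \<Rightarrow> int" where "val x = (THE k. x ^ N = \<iota> k)"

lemma power_exponent_val:
  assumes "x \<in> dunits"
  shows "x ^ N = \<iota> (val x)"
proof -
  obtain k where k: "x ^ N = \<iota> k" using power_exponent_in_range[OF assms] by auto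
  have "val x = k"
    unfolding val_def by (rule the_equality) (use k inj_iota in \<open>simp_all add: inj_eq\<close>)
  then show ?thesis using k by simp
qed

lemma val_eqI: "x \<in> dunits \<Longrightarrow> x ^ N = \<iota> k \<Longrightarrow> val x = k"
  using power_exponent_val inj_iota by (metis injD)

lemma val_mult: "x \<in> dunits \<Longrightarrow> y \<in> dunits \<Longrightarrow> val (x * y) = val x + val y"
  using comm_monoid.nat_pow_distrib[OF comm_group.axioms(1)[OF comm_group_unit_group], of x y N]
  by (intro val_eqI) (simp_all add: power_exponent_val iota_mult)

lemma val_inj: "x \<in> dunits \<Longrightarrow> y \<in> dunits \<Longrightarrow> val x = val y \<Longrightarrow> x = y"
  using power_exponent_val units_power_inj exponent_pos by metis

lemma val_iota: "val (\<iota> k) = int N * k"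
  using val_eqI[OF iota_in_dunits] iota_power by blast

lemma val_inv: "x \<in> dunits \<Longrightarrow> val (inv\<^bsub>unit_group\<^esub> x) = - val x"
  using val_mult[of x "inv\<^bsub>unit_group\<^esub> x"] val_iota[of 0] iota_zero by simp

lemma val_int_pow: "x \<in> dunits \<Longrightarrow> val (x [^]\<^bsub>unit_group\<^esub> (k::int)) = k * val x"
proof -
  assume x: "x \<in> dunits"
  have nat_pow: "val (x ^ n) = int n * val x" for n
  proof (rule val_eqI)
    have "(x ^ n) ^ N = (x ^ N) ^ n" by (simp flip: power_mult add: mult.commute)
    then show "(x ^ n) ^ N = \<iota> (int n * val x)" using power_exponent_val[OF x] iota_power by simp
  qed (use x in simp)
  show ?thesis using x by (simp add: int_pow_def2 val_inv nat_pow)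
qed

lemma cyclic_group_unit_group: "cyclic_group (unit_group :: 'd monoid)"
proof -
  interpret U: group "unit_group :: 'd monoid" by (rule group_unit_group)
  have "\<exists>d>0. val ` dunits = range (\<lambda>k. k * d)"
  proof (rule int_set_closed_diff_eq_multiples)
    show "a - b \<in> val ` dunits" if a: "a \<in> val ` dunits" and b: "b \<in> val ` dunits" for a b
    proof -
      obtain x y where "x \<in> dunits" "y \<in> dunits" "a = val x" "b = val y" using a b by blast
      then show ?thesis
        by (intro image_eqI[of _ _ "x * inv\<^bsub>unit_group\<^esub> y"]) (simp_all add: val_mult val_inv)
    qed
    show "int N \<in> val ` dunits" using val_iota[of 1] iota_in_dunits by (metis image_eqI mult_1_right)
  qed (use exponent_pos in simp)
  then obtain d where d: "val ` dunits = range (\<lambda>k. k * d)" by blast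
  then obtain g where g: "g \<in> dunits" "val g = d" by (metis image_iff mult_1 rangeI)
  have "dunits \<subseteq> generate unit_group {g}"
  proof
    fix y :: 'd assume y: "y \<in> dunits"
    then obtain k where "val y = k * d" using d by blast
    then have "y = g [^]\<^bsub>unit_group\<^esub> k" using val_inj y g U.int_pow_closed val_int_pow by simp
    then show "y \<in> generate unit_group {g}" using U.generate_pow g by auto
  qed
  moreover have "generate unit_group {g} \<subseteq> dunits" using U.generate_incl g by simp
  ultimately show ?thesis using g unfolding cyclic_group_def by auto
qed

end

theorem mainTheorem17:
  fixes \<phi> :: "int option \<Rightarrow> 'd::{semiring,comm_monoid_add,monoid_mult}"
  assumes "division_semialgebra_zmax \<phi>"
    and "finite (carrier (unit_quotient \<phi>))"
  shows "cyclic_group (unit_quotient \<phi>)"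
proof -
  interpret zmax_semialgebra \<phi> by unfold_locales (fact assms(1))
  obtain N where "0 < N" "\<And>x. x \<in> dunits \<Longrightarrow> x ^ N \<in> range \<iota>"
    using uniform_exponent[OF assms(2)] by blast
  then interpret zmax_semialgebra_exponent \<phi> N by unfold_locales
  have "range \<iota> \<lhd> unit_group"
    using comm_group.subgroup_imp_normal[OF comm_group_unit_group subgroup_range_iota] .
  then show ?thesis
    unfolding unit_quotient_def image_zmax_units
    by (rule cyclic_group_FactGroup[OF cyclic_group_unit_group])
qed

end
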